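(* Let $v$ be any complex number. For every integer $R\geq 1$, as real $n\to\infty$, \[ \Gamma(n+v+1)=\sqrt{2\pi n}\,\frac{n^{n+v}}{e^n}\left(1+\frac{\gamma_1(v)}{n}+\frac{\gamma_2(v)}{n^2}+\cdots+\frac{\gamma_{R-1}(v)}{n^{R-1}}+O\!\left(\frac{1}{n^R}\right)\right), \] with an implied constant depending only on $R$ and $v$, where \[ \gamma_r(v)=\sum_{m=0}^{2r}(-1)^m\binom{v}{2r-m}\sum_{k=0}^{m}\frac{(2r+2k-1)!!}{(-1)^k\,k!}\,\mathcal{A}_{m,k}\!\left(\tfrac13,\tfrac14,\tfrac15,\dots\right). \]
   Context: For integers $n$ and $k\geq 0$ and a sequence $a_1,a_2,\dots$ of complex numbers, the De Moivre polynomial $\mathcal{A}_{n,k}(a_1,a_2,\dots)$ is the coefficient of $x^n$ in the formal power series $(a_1x+a_2x^2+a_3x^3+\cdots)^k$ (so $\mathcal{A}_{0,0}=1$ and $\mathcal{A}_{n,k}=0$ for $n<k$). The double factorial is $n!!=n(n-2)\cdots 3\cdot 1$ for odd $n\geq1$, $n!!=n(n-2)\cdots 4\cdot 2$ for even $n\geq 2$, and $0!!=(-1)!!=1$. For complex $v$ and integer $j\geq0$, $\binom{v}{j}=v(v-1)\cdots(v-j+1)/j!$. Here $n^{n+v}=e^{(n+v)\log n}$. *)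

theory Defs
  imports "HOL-Analysis.Analysis" "HOL-Computational_Algebra.Formal_Power_Series"
    "HOL-Library.Landau_Symbols"
begin

text \<open>De Moivre polynomial: coefficient of x^n in (a_1 x + a_2 x^2 + ...)^k.
  The sequence a_1, a_2, ... is given as a function a :: nat => complex, using a i for i >= 1
  (the value a 0 is ignored).\<close>
definition de_moivre :: "nat \<Rightarrow> nat \<Rightarrow> (nat \<Rightarrow> complex) \<Rightarrow> complex" where
  "de_moivre n k a = fps_nth ((Abs_fps (\<lambda>i. if i = 0 then 0 else a i)) ^ k) n"

text \<open>Double factorial for integers n >= -1 (value 1 for n <= 0).\<close>
definition dfact :: "int \<Rightarrow> nat" where
  "dfact n = nat (\<Prod>{i \<in> {1..n}. even (n - i)})"

definition gamma_coeff :: "nat \<Rightarrow> complex \<Rightarrow> complex" where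
  "gamma_coeff r v =
     (\<Sum>m = 0..2*r. (-1)^m * (v gchoose (2*r - m)) *
        (\<Sum>k = 0..m. of_nat (dfact (2 * int r + 2 * int k - 1)) / ((-1)^k * fact k)
                      * de_moivre m k (\<lambda>i. 1 / of_nat (i + 2))))"

end

(* Laplace's method. Substituting t = N (1 + s) in Euler's integral gives
   Gamma (N + v + 1) = N^(N+v+1) e^(-N) * integral over s > -1 of (1 + s)^v exp (-N (s - ln (1 + s))).
   Writing ln (1 + s) - s + s^2/2 = s^2 G(s), the integrand is exp (-N s^2/2) (1 + s)^v exp (N s^2 G(s)).
   Truncating the exponential series and the power series of (1 + s)^v G(s)^k after 2R terms leaves a
   polynomial in s and N whose Gaussian integral is exactly sqrt (2 pi / N) times the sum of gamma_r(v) / N^r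
   for r < R: odd moments vanish, even moments produce the double factorials, and the alternating signs
   of G turn its powers into the De Moivre polynomials of 1/3, 1/4, ....  Near s = 0 the truncation error
   is a combination of N^j s^(2j+2R) exp (-N s^2/4), each of integral O(N^(-R-1/2)); away from 0 both the
   integrand and the Gaussian-weighted polynomial are exponentially small in N. *)

theory Submission
  imports Defs "HOL-Probability.Distributions" "HOL-Real_Asymp.Real_Asymp"
begin

lemma dfact_odd_Suc: "dfact (2 * int (Suc p) - 1) = (2 * p + 1) * dfact (2 * int p - 1)"
proof -
  have odd_set: "{i \<in> {1..2 * int (Suc p) - 1}. even (2 * int (Suc p) - 1 - i)} =
        insert (2 * int p + 1) {i \<in> {1..2 * int p - 1}. even (2 * int p - 1 - i)}"
    by (rule set_eqI, simp, presburger)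
  have "dfact (2 * int (Suc p) - 1) =
      nat ((2 * int p + 1) * \<Prod>{i \<in> {1..2 * int p - 1}. even (2 * int p - 1 - i)})"
    unfolding dfact_def odd_set by (subst prod.insert) (auto intro: finite_subset[of _ "{1..2 * int p}"])
  moreover have "0 \<le> \<Prod>{i \<in> {1..2 * int p - 1}. even (2 * int p - 1 - i)}"
    by (rule prod_nonneg) auto
  ultimately show ?thesis
    by (simp add: dfact_def nat_mult_distrib nat_add_distrib)
qed

lemma dfact_odd_mult_fact: "real (dfact (2 * int p - 1)) * 2 ^ p * fact p = fact (2 * p)"
proof (induction p)
  case 0
  then show ?case by (simp add: dfact_def)
next
  case (Suc p)
  have "fact (2 * Suc p) = (2 * real p + 1) * (2 * (real p + 1)) * (fact (2 * p) :: real)"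
    by (simp add: algebra_simps)
  then show ?case
    unfolding dfact_odd_Suc Suc.IH[symmetric] by (simp add: algebra_simps)
qed

lemma fps_power_nth_eq_0_below:
  fixes f :: "'a::comm_ring_1 fps"
  assumes "fps_nth f 0 = 0" "m < k"
  shows "fps_nth (f ^ k) m = 0"
proof -
  have "f = fps_X * fps_shift 1 f"
    by (rule fps_ext) (simp add: fps_X_mult_nth assms(1))
  then have "f ^ k = fps_X ^ k * fps_shift 1 f ^ k"
    by (metis power_mult_distrib)
  then show ?thesis using assms(2) by (simp add: fps_X_power_mult_nth)
qed

lemma fps_power_nth_alternating:
  fixes f g :: "'a::comm_ring_1 fps"
  assumes g: "\<And>i. fps_nth g i = (-1) ^ (i + 1) * fps_nth f i"
  shows "fps_nth (g ^ k) m = (-1) ^ (m + k) * fps_nth (f ^ k) m"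
proof (induction k arbitrary: m)
  case 0
  then show ?case by (simp add: fps_one_nth)
next
  case (Suc k)
  have "fps_nth (g ^ Suc k) m = (\<Sum>i = 0..m. fps_nth g i * fps_nth (g ^ k) (m - i))"
    by (simp add: fps_mult_nth)
  also have "\<dots> = (\<Sum>i = 0..m. (-1) ^ (m + Suc k) * (fps_nth f i * fps_nth (f ^ k) (m - i)))"
  proof (rule sum.cong[OF refl])
    fix i assume "i \<in> {0..m}"
    then have "(-1 :: 'a) ^ (i + 1) * (-1) ^ (m - i + k) = (-1) ^ (m + Suc k)"
      by (simp add: power_add[symmetric])
    then show "fps_nth g i * fps_nth (g ^ k) (m - i) =
        (-1) ^ (m + Suc k) * (fps_nth f i * fps_nth (f ^ k) (m - i))"
      by (simp add: g Suc.IH algebra_simps)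
  qed
  also have "\<dots> = (-1) ^ (m + Suc k) * fps_nth (f ^ Suc k) m"
    by (simp add: fps_mult_nth sum_distrib_left)
  finally show ?case .
qed

definition log_remainder_fps :: "complex fps" where
  "log_remainder_fps = Abs_fps (\<lambda>i. if i = 0 then 0 else (-1) ^ (i + 1) / of_nat (i + 2))"

definition stirling_fps :: "complex \<Rightarrow> nat \<Rightarrow> complex fps" where
  "stirling_fps v k = fps_binomial v * log_remainder_fps ^ k"

(* The signs (-1)^m and (-1)^k in gamma_coeff are absorbed by the alternating coefficients of
   log_remainder_fps, which turn the De Moivre polynomials of 1/3, 1/4, ... into its powers. *)
lemma gamma_coeff_eq_stirling_fps:
  assumes "2 * r < K"
  shows "gamma_coeff r v =
    (\<Sum>k<K. of_nat (dfact (2 * int r + 2 * int k - 1)) / fact k * fps_nth (stirling_fps v k) (2 * r))"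
proof -
  define D :: "complex fps" where "D = Abs_fps (\<lambda>i. if i = 0 then 0 else 1 / of_nat (i + 2))"
  define d where "d k = (of_nat (dfact (2 * int r + 2 * int k - 1)) :: complex)" for k
  have D_pow: "fps_nth (log_remainder_fps ^ k) m = (-1) ^ (m + k) * fps_nth (D ^ k) m" for k m
    by (rule fps_power_nth_alternating) (simp add: log_remainder_fps_def D_def)
  have "gamma_coeff r v = (\<Sum>m = 0..2*r. \<Sum>k<K.
          (-1) ^ m * (v gchoose (2*r - m)) * (d k / ((-1) ^ k * fact k) * fps_nth (D ^ k) m))"
    unfolding gamma_coeff_def de_moivre_def d_def D_def[symmetric] sum_distrib_left
  proof (rule sum.cong[OF refl], rule sum.mono_neutral_left)
    fix m assume "m \<in> {0..2*r}"
    then show "{0..m} \<subseteq> {..<K}" using assms by auto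
  qed (auto simp: fps_power_nth_eq_0_below D_def)
  also have "\<dots> = (\<Sum>k<K. \<Sum>m = 0..2*r.
          (-1) ^ m * (v gchoose (2*r - m)) * (d k / ((-1) ^ k * fact k) * fps_nth (D ^ k) m))"
    by (rule sum.swap)
  also have "\<dots> = (\<Sum>k<K. d k / fact k * fps_nth (stirling_fps v k) (2 * r))"
  proof (rule sum.cong[OF refl])
    fix k
    have "fps_nth (stirling_fps v k) (2 * r) =
        (\<Sum>m = 0..2*r. (-1) ^ (m + k) * fps_nth (D ^ k) m * (v gchoose (2*r - m)))"
      unfolding stirling_fps_def by (subst mult.commute) (simp add: fps_mult_nth fps_binomial_def D_pow)
    moreover have "d k / ((-1) ^ k * fact k) = d k * (-1) ^ k / fact k"
      by (cases "even k") auto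
    ultimately show "(\<Sum>m = 0..2*r. (-1) ^ m * (v gchoose (2*r - m)) *
        (d k / ((-1) ^ k * fact k) * fps_nth (D ^ k) m)) = d k / fact k * fps_nth (stirling_fps v k) (2 * r)"
      by (simp add: sum_distrib_left sum_divide_distrib power_add mult_ac)
  qed
  finally show ?thesis by (simp add: d_def)
qed

lemma gamma_coeff_0: "gamma_coeff 0 v = 1"
  by (simp add: gamma_coeff_def de_moivre_def dfact_def)

lemma fps_conv_radius_log_remainder: "fps_conv_radius log_remainder_fps \<ge> 1"
  unfolding fps_conv_radius_def
proof (rule conv_radius_geI_ex)
  fix r :: real assume r: "0 < r" "ereal r < 1"
  have "norm (fps_nth log_remainder_fps n * complex_of_real r ^ n) \<le> r ^ n" for n
  proof -
    have "norm (of_nat (n + 2) :: complex) = real (n + 2)"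
      by (rule norm_of_nat)
    then have "norm (fps_nth log_remainder_fps n) \<le> 1"
      by (simp add: log_remainder_fps_def norm_divide norm_power)
    then show ?thesis
      using r by (simp add: norm_mult norm_power mult_left_le_one_le)
  qed
  moreover have "summable (\<lambda>n. r ^ n)"
    using r by (intro summable_geometric) simp
  ultimately have "summable (\<lambda>n. fps_nth log_remainder_fps n * complex_of_real r ^ n)"
    by (rule summable_comparison_test'[rotated])
  then show "\<exists>z::complex. norm z = r \<and> summable (\<lambda>n. fps_nth log_remainder_fps n * z ^ n)"
    using r by (intro exI[of _ "complex_of_real r"]) simp
qed

lemma fps_conv_radius_stirling_fps: "fps_conv_radius (stirling_fps v k) \<ge> 1"
proof -
  have "1 \<le> min (fps_conv_radius (fps_binomial v)) (fps_conv_radius (log_remainder_fps ^ k))"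
    using fps_conv_radius_log_remainder fps_conv_radius_power[of log_remainder_fps k]
    by (auto simp: fps_conv_radius_binomial)
  also have "\<dots> \<le> fps_conv_radius (stirling_fps v k)"
    unfolding stirling_fps_def by (rule fps_conv_radius_mult)
  finally show ?thesis .
qed

lemma eval_log_remainder_fps:
  fixes s :: real
  assumes s: "\<bar>s\<bar> < 1"
  shows "complex_of_real (ln (1 + s) - s + s\<^sup>2 / 2) =
    (complex_of_real s)\<^sup>2 * eval_fps log_remainder_fps (complex_of_real s)"
proof -
  define z where "z = complex_of_real s"
  have nz: "norm z < 1" using s by (simp add: z_def)
  define f where "f n = - ((-z) ^ n) / of_nat n" for n
  have "f sums ln (1 + z)" unfolding f_def using nz by (rule Ln_series')
  then have "(\<lambda>n. f (n + 2)) sums (ln (1 + z) - z)"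
    by (subst sums_iff_shift) (simp add: f_def eval_nat_numeral)
  then have "(\<lambda>n. f (n + 2) + (if n = 0 then z\<^sup>2 / 2 else 0)) sums (ln (1 + z) - z + z\<^sup>2 / 2)"
    by (intro sums_add sums_single)
  moreover have "ereal (norm z) < fps_conv_radius log_remainder_fps"
    using nz by (intro less_le_trans[OF _ fps_conv_radius_log_remainder]) simp
  then have "(\<lambda>n. z\<^sup>2 * (fps_nth log_remainder_fps n * z ^ n)) sums (z\<^sup>2 * eval_fps log_remainder_fps z)"
    by (intro sums_mult sums_eval_fps)
  moreover have "z\<^sup>2 * (fps_nth log_remainder_fps n * z ^ n) = f (n + 2) + (if n = 0 then z\<^sup>2 / 2 else 0)" for n
  proof (cases "n = 0")
    case True
    then show ?thesis by (simp add: f_def log_remainder_fps_def power2_eq_square)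
  next
    case False
    then show ?thesis
      by (simp add: f_def log_remainder_fps_def power_add power2_eq_square field_simps power_minus[of z])
  qed
  ultimately have "z\<^sup>2 * eval_fps log_remainder_fps z = ln (1 + z) - z + z\<^sup>2 / 2"
    by (simp add: sums_unique2)
  moreover have "ln (1 + z) = complex_of_real (ln (1 + s))"
    using s Ln_of_real[of "1 + s"] by (simp add: z_def)
  ultimately show ?thesis by (simp add: z_def)
qed

lemma eval_fps_split:
  fixes f :: "'a::{banach, real_normed_field} fps"
  assumes "ereal (norm z) < fps_conv_radius f"
  shows "eval_fps f z = (\<Sum>m<M. fps_nth f m * z ^ m) + z ^ M * eval_fps (fps_shift M f) z"
proof -
  have "summable (\<lambda>n. fps_nth f n * z ^ n)"
    using assms by (rule summable_fps)
  then have "eval_fps f z = (\<Sum>n. fps_nth f (n + M) * z ^ (n + M)) + (\<Sum>m<M. fps_nth f m * z ^ m)"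
    unfolding eval_fps_def by (rule suminf_split_initial_segment)
  also have "(\<Sum>n. fps_nth f (n + M) * z ^ (n + M)) = (\<Sum>n. z ^ M * (fps_nth (fps_shift M f) n * z ^ n))"
    by (simp add: power_add mult_ac)
  also have "\<dots> = z ^ M * eval_fps (fps_shift M f) z"
    unfolding eval_fps_def using assms by (intro suminf_mult summable_fps) simp
  finally show ?thesis by simp
qed

lemma eval_fps_minus_trunc_bound:
  fixes f :: "'a::{banach, real_normed_field, heine_borel} fps"
  assumes "ereal r < fps_conv_radius f"
  obtains C where "\<And>z. norm z \<le> r \<Longrightarrow> norm (eval_fps f z - (\<Sum>m<M. fps_nth f m * z ^ m)) \<le> C * norm z ^ M"
proof -
  have radius: "ereal (norm z) < fps_conv_radius f" if "norm z \<le> r" for z :: 'a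
    using assms that by (auto intro: le_less_trans[of _ "ereal r"])
  then have ball: "cball 0 r \<subseteq> eball (0::'a) (fps_conv_radius (fps_shift M f))"
    by (simp add: subset_iff dist_norm)
  have "compact (eval_fps (fps_shift M f) ` cball 0 r)"
    by (intro compact_continuous_image continuous_on_subset[OF continuous_on_eval_fps ball]) auto
  then obtain C where C: "\<And>z. norm z \<le> r \<Longrightarrow> norm (eval_fps (fps_shift M f) z) \<le> C"
    by (fastforce dest: compact_imp_bounded simp: bounded_iff)
  show ?thesis
  proof
    fix z :: 'a assume z: "norm z \<le> r"
    then have "eval_fps f z - (\<Sum>m<M. fps_nth f m * z ^ m) = z ^ M * eval_fps (fps_shift M f) z"
      by (subst eval_fps_split[OF radius, where M = M]) simp_all
    then have "norm (eval_fps f z - (\<Sum>m<M. fps_nth f m * z ^ m)) =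
        norm (eval_fps (fps_shift M f) z) * norm z ^ M"
      by (simp add: norm_mult norm_power)
    also have "\<dots> \<le> C * norm z ^ M"
      by (rule mult_right_mono[OF C[OF z]]) simp
    finally show "norm (eval_fps f z - (\<Sum>m<M. fps_nth f m * z ^ m)) \<le> C * norm z ^ M" .
  qed
qed

lemma has_bochner_integral_lebesgue_of_lborel:
  fixes f :: "real \<Rightarrow> 'a::{banach, second_countable_topology}"
  assumes "has_bochner_integral lborel f x"
  shows "has_bochner_integral lebesgue f x"
proof -
  have f: "f \<in> borel_measurable lborel"
    using assms by (rule borel_measurable_has_bochner_integral)
  show ?thesis
    using assms integrable_completion[OF f] integral_completion[OF f]
    by (simp add: has_bochner_integral_iff)
qed

definition gauss_moment :: "real \<Rightarrow> nat \<Rightarrow> real" where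
  "gauss_moment a p = (if even p then sqrt (2 * pi / a) * dfact (int p - 1) / a ^ (p div 2) else 0)"

lemma has_bochner_integral_gauss_moment:
  fixes a :: real
  assumes a: "a > 0"
  shows "has_bochner_integral lebesgue (\<lambda>s. exp (- a * s\<^sup>2 / 2) * s ^ p) (gauss_moment a p)"
proof -
  define \<sigma> where "\<sigma> = 1 / sqrt a"
  have \<sigma>: "\<sigma> > 0" "\<sigma>\<^sup>2 = 1 / a" using a by (simp_all add: \<sigma>_def power_divide)
  have density: "sqrt (2 * pi / a) * normal_density 0 \<sigma> s = exp (- a * s\<^sup>2 / 2)" for s
    using a by (simp add: normal_density_def \<sigma> real_sqrt_divide real_sqrt_mult field_simps)
  have "has_bochner_integral lborel (\<lambda>s. exp (- a * s\<^sup>2 / 2) * s ^ p) (gauss_moment a p)"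
  proof (cases "even p")
    case True
    then obtain q where p: "p = 2 * q" by (elim evenE)
    have "has_bochner_integral lborel (\<lambda>s. sqrt (2 * pi / a) * (normal_density 0 \<sigma> s * (s - 0) ^ (2 * q)))
        (sqrt (2 * pi / a) * (fact (2 * q) / ((2 / \<sigma>\<^sup>2) ^ q * fact q)))"
      by (intro has_bochner_integral_mult_right normal_moment_even \<sigma>)
    moreover have "fact (2 * q) / ((2 / \<sigma>\<^sup>2) ^ q * fact q) = real (dfact (2 * int q - 1)) / a ^ q"
      unfolding dfact_odd_mult_fact[of q, symmetric] using a by (simp add: \<sigma> power_mult_distrib)
    ultimately show ?thesis
      by (simp add: p gauss_moment_def density mult.assoc[symmetric])
  next
    case False
    then obtain q where p: "p = 2 * q + 1" by (elim oddE)
    have "has_bochner_integral lborel (\<lambda>s. sqrt (2 * pi / a) * (normal_density 0 \<sigma> s * (s - 0) ^ (2 * q + 1)))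
        (sqrt (2 * pi / a) * 0)"
      by (intro has_bochner_integral_mult_right normal_moment_odd \<sigma>)
    then show ?thesis
      by (simp add: p gauss_moment_def density mult.assoc[symmetric])
  qed
  then show ?thesis by (rule has_bochner_integral_lebesgue_of_lborel)
qed

lemma gauss_moment_scale:
  assumes "a > 0"
  shows "gauss_moment a p = gauss_moment 1 p / a ^ (p div 2) / sqrt a"
  using assms by (simp add: gauss_moment_def real_sqrt_divide field_simps)

lemma integrable_gauss_abs_moment: "integrable lebesgue (\<lambda>s::real. exp (- s\<^sup>2 / 2) * \<bar>s\<bar> ^ p)"
proof -
  have "integrable lborel (\<lambda>s. sqrt (2 * pi) * (normal_density 0 1 s * \<bar>s - 0\<bar> ^ p))"
    by (intro integrable_mult_right integrable_normal_moment_abs) simp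
  then have "integrable lborel (\<lambda>s::real. exp (- s\<^sup>2 / 2) * \<bar>s\<bar> ^ p)"
    by (simp add: normal_density_def)
  then show ?thesis
    by (simp add: integrable_completion borel_measurable_integrable)
qed

definition stirling_integrand :: "complex \<Rightarrow> real \<Rightarrow> real \<Rightarrow> complex" where
  "stirling_integrand v N s = (if s > -1
     then exp (v * of_real (ln (1 + s)) - of_real (N * (s - ln (1 + s)))) else 0)"

lemma norm_stirling_integrand:
  "norm (stirling_integrand v N s) =
     (if s > -1 then exp (Re v * ln (1 + s) - N * (s - ln (1 + s))) else 0)"
  by (simp add: stirling_integrand_def)

lemma has_bochner_integral_stirling_integrand:
  fixes v :: complex and N :: real
  assumes N: "N > 0" and re: "N + Re v + 1 > 0"
  defines "c \<equiv> exp ((of_real N + v) * of_real (ln N)) / of_real (exp N)"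
  shows "has_bochner_integral lebesgue (stirling_integrand v N) (Gamma (of_real N + v + 1) / (of_real N * c))"
proof -
  define z where "z = of_real N + v + 1"
  define f where "f = (\<lambda>t::real. of_real t powr (z - 1) / of_real (exp t))"
  have rez: "Re z > 0" using re by (simp add: z_def)
  have si: "set_integrable lebesgue {0<..} f"
    unfolding f_def by (rule absolutely_integrable_Gamma_integral'[OF rez])
  have "(LINT t:{0<..}|lebesgue. f t) = Gamma z"
    using set_lebesgue_integral_eq_integral(2)[OF si] Gamma_integral_complex'[OF rez]
    by (simp add: f_def integral_unique)
  then have "has_bochner_integral lebesgue (\<lambda>t. indicator {0<..} t *\<^sub>R f t) (Gamma z)"
    using si unfolding set_integrable_def set_lebesgue_integral_def
    by (simp add: has_bochner_integral_iff)
  then have affine: "has_bochner_integral lebesgue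
      (\<lambda>s. indicator {0<..} (N + N * s) *\<^sub>R f (N + N * s)) (Gamma z /\<^sub>R N)"
    using has_bochner_integral_lebesgue_real_affine_iff[of N _ "Gamma z" N] N by simp
  have substitution: "indicator {0<..} (N + N * s) *\<^sub>R f (N + N * s) = c * stirling_integrand v N s" for s
  proof (cases "s > -1")
    case False
    then have "N + N * s \<le> 0"
      using N mult_left_mono[of s "-1" N] by simp
    then show ?thesis using False by (simp add: stirling_integrand_def)
  next
    case True
    then have "1 + s > 0" by simp
    moreover have "N + N * s = N * (1 + s)" by (simp add: algebra_simps)
    ultimately have pos: "N + N * s > 0" "1 + s > 0" using N by simp_all
    have "ln (N + N * s) = ln N + ln (1 + s)"
      using ln_mult_pos[OF N pos(2)] by (simp add: algebra_simps)
    then have "ln (complex_of_real (N + N * s)) = of_real (ln N + ln (1 + s))"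
      using Ln_of_real[OF pos(1)] by simp
    then have "f (N + N * s) = exp ((z - 1) * of_real (ln N + ln (1 + s)) - of_real (N + N * s))"
      using pos by (simp add: f_def powr_def exp_diff flip: exp_of_real)
    also have "\<dots> = c * stirling_integrand v N s"
      using True by (simp add: c_def stirling_integrand_def z_def exp_diff exp_add[symmetric] exp_of_real[symmetric]
          algebra_simps)
    finally show ?thesis using pos by simp
  qed
  have "c \<noteq> 0" by (simp add: c_def)
  from affine have "has_bochner_integral lebesgue (\<lambda>s. c * stirling_integrand v N s / c) (Gamma z /\<^sub>R N / c)"
    unfolding substitution by (rule has_bochner_integral_divide_zero)
  moreover have "Gamma z /\<^sub>R N / c = Gamma z / (of_real N * c)"
    by (simp add: scaleR_conv_of_real field_simps)
  ultimately show ?thesis using \<open>c \<noteq> 0\<close> by (simp add: z_def)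
qed

definition stirling_poly :: "complex \<Rightarrow> nat \<Rightarrow> real \<Rightarrow> real \<Rightarrow> complex" where
  "stirling_poly v R N s = (\<Sum>k<2*R. of_real ((N * s\<^sup>2) ^ k / fact k) *
     (\<Sum>m<2*R. fps_nth (stirling_fps v k) m * of_real s ^ m))"

lemma gauss_stirling_poly_eq_sum:
  "of_real (exp (- N * s\<^sup>2 / 2)) * stirling_poly v R N s =
    (\<Sum>k<2*R. \<Sum>m<2*R. fps_nth (stirling_fps v k) m *
       of_real (N ^ k / fact k * (exp (- N * s\<^sup>2 / 2) * s ^ (2 * k + m))))"
  by (simp add: stirling_poly_def sum_distrib_left power_mult_distrib power_add power_mult[symmetric] mult_ac)

lemma sum_lessThan_double_odd_zero:
  fixes f :: "nat \<Rightarrow> 'a::comm_monoid_add"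
  assumes "\<And>m. odd m \<Longrightarrow> f m = 0"
  shows "(\<Sum>m<2 * n. f m) = (\<Sum>r<n. f (2 * r))"
  using assms by (induction n) simp_all

lemma stirling_poly_gauss_moments:
  fixes v :: complex and N :: real
  assumes N: "N > 0"
  shows "(\<Sum>k<2*R. \<Sum>m<2*R. fps_nth (stirling_fps v k) m * of_real (N ^ k / fact k * gauss_moment N (2 * k + m)))
     = of_real (sqrt (2 * pi / N)) * (\<Sum>r<R. gamma_coeff r v / of_real N ^ r)"
proof -
  define c where "c k m = fps_nth (stirling_fps v k) m" for k m
  define d where "d k r = (of_nat (dfact (2 * int r + 2 * int k - 1)) :: complex)" for k r
  have even_moment: "of_real (N ^ k / fact k * gauss_moment N (2 * k + 2 * r)) =
      of_real (sqrt (2 * pi / N)) / of_real N ^ r * (d k r / fact k)" for k r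
  proof -
    have "dfact (int (2 * k + 2 * r) - 1) = dfact (2 * int r + 2 * int k - 1)"
      by (simp add: add.commute)
    then show ?thesis
      using N unfolding gauss_moment_def by (simp add: d_def power_add field_simps)
  qed
  have "(\<Sum>k<2*R. \<Sum>m<2*R. c k m * of_real (N ^ k / fact k * gauss_moment N (2 * k + m)))
      = (\<Sum>k<2*R. \<Sum>r<R. c k (2 * r) * of_real (N ^ k / fact k * gauss_moment N (2 * k + 2 * r)))"
  proof (rule sum.cong[OF refl])
    fix k
    show "(\<Sum>m<2*R. c k m * of_real (N ^ k / fact k * gauss_moment N (2 * k + m))) =
        (\<Sum>r<R. c k (2 * r) * of_real (N ^ k / fact k * gauss_moment N (2 * k + 2 * r)))"
      by (rule sum_lessThan_double_odd_zero) (simp add: gauss_moment_def)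
  qed
  also have "\<dots> = (\<Sum>r<R. \<Sum>k<2*R. c k (2 * r) * of_real (N ^ k / fact k * gauss_moment N (2 * k + 2 * r)))"
    by (rule sum.swap)
  also have "\<dots> = (\<Sum>r<R. of_real (sqrt (2 * pi / N)) / of_real N ^ r * gamma_coeff r v)"
  proof (rule sum.cong[OF refl])
    fix r assume "r \<in> {..<R}"
    then have "gamma_coeff r v = (\<Sum>k<2*R. d k r / fact k * c k (2 * r))"
      unfolding c_def d_def by (intro gamma_coeff_eq_stirling_fps) simp
    then show "(\<Sum>k<2*R. c k (2 * r) * of_real (N ^ k / fact k * gauss_moment N (2 * k + 2 * r))) =
        of_real (sqrt (2 * pi / N)) / of_real N ^ r * gamma_coeff r v"
      unfolding even_moment by (simp add: sum_distrib_left mult_ac)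
  qed
  finally show ?thesis
    by (simp add: c_def sum_distrib_left mult_ac)
qed

lemma has_bochner_integral_gauss_stirling_poly:
  fixes v :: complex and N :: real
  assumes "N > 0"
  shows "has_bochner_integral lebesgue (\<lambda>s. of_real (exp (- N * s\<^sup>2 / 2)) * stirling_poly v R N s)
     (of_real (sqrt (2 * pi / N)) * (\<Sum>r<R. gamma_coeff r v / of_real N ^ r))"
  unfolding gauss_stirling_poly_eq_sum stirling_poly_gauss_moments[OF assms, symmetric]
  by (intro has_bochner_integral_sum has_bochner_integral_mult_right has_bochner_integral_of_real
      has_bochner_integral_gauss_moment assms)

lemma stirling_integrand_eq:
  fixes v :: complex and N s :: real
  assumes s: "\<bar>s\<bar> < 1"
  shows "stirling_integrand v N s = eval_fps (fps_binomial v) (of_real s) * of_real (exp (- N * s\<^sup>2 / 2)) *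
    exp (of_real (N * s\<^sup>2) * eval_fps log_remainder_fps (of_real s))"
proof -
  have pos: "1 + s > 0" using s by simp
  have "eval_fps (fps_binomial v) (of_real s) = of_real (1 + s) powr v"
    using s by (simp add: eval_fps_binomial)
  also have "\<dots> = exp (v * of_real (ln (1 + s)))"
    using pos by (simp add: powr_def Ln_of_real[OF pos] mult.commute del: of_real_add)
  finally have binomial: "eval_fps (fps_binomial v) (of_real s) = exp (v * of_real (ln (1 + s)))" .
  have "of_real (N * s\<^sup>2) * eval_fps log_remainder_fps (of_real s) =
      of_real N * of_real (ln (1 + s) - s + s\<^sup>2 / 2)"
    unfolding eval_log_remainder_fps[OF s] by simp
  then have exponent: "v * of_real (ln (1 + s)) - of_real (N * (s - ln (1 + s))) =
      v * of_real (ln (1 + s)) + of_real (- N * s\<^sup>2 / 2) +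
      of_real (N * s\<^sup>2) * eval_fps log_remainder_fps (of_real s)"
    by (simp add: algebra_simps)
  have "stirling_integrand v N s = exp (v * of_real (ln (1 + s)) + of_real (- N * s\<^sup>2 / 2) +
      of_real (N * s\<^sup>2) * eval_fps log_remainder_fps (of_real s))"
    unfolding stirling_integrand_def exponent[symmetric] using pos by simp
  then show ?thesis
    by (simp only: exp_add binomial exp_of_real)
qed

lemma norm_exp_minus_trunc_le:
  fixes w :: complex
  assumes "K \<ge> 1"
  shows "norm (exp w - (\<Sum>k<K. w ^ k / fact k)) \<le> exp (norm w) * norm w ^ K"
proof -
  have K: "{..<K} = {..K - 1}" "Suc (K - 1) = K" using assms by auto
  have "norm (exp w - (\<Sum>k<K. w ^ k / fact k)) \<le> exp (norm w) * norm w ^ K / fact (K - 1)"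
    using Taylor_exp_field[of w "K - 1"] unfolding K .
  also have "\<dots> \<le> exp (norm w) * norm w ^ K / 1"
    by (intro divide_left_mono) (simp_all add: fact_ge_1)
  finally show ?thesis by simp
qed

lemma stirling_integrand_minus_poly_eq:
  fixes v :: complex and N s :: real
  assumes s: "\<bar>s\<bar> < 1"
  defines "w \<equiv> of_real (N * s\<^sup>2) * eval_fps log_remainder_fps (of_real s)"
  shows "stirling_integrand v N s - of_real (exp (- N * s\<^sup>2 / 2)) * stirling_poly v R N s =
    of_real (exp (- N * s\<^sup>2 / 2)) * (eval_fps (fps_binomial v) (of_real s) * (exp w - (\<Sum>k<2*R. w ^ k / fact k))) +
    of_real (exp (- N * s\<^sup>2 / 2)) * (\<Sum>k<2*R. of_real ((N * s\<^sup>2) ^ k / fact k) *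
      (eval_fps (stirling_fps v k) (of_real s) - (\<Sum>m<2*R. fps_nth (stirling_fps v k) m * of_real s ^ m)))"
proof -
  define z where "z = complex_of_real s"
  define b where "b = eval_fps (fps_binomial v) z"
  define G where "G = eval_fps log_remainder_fps z"
  define P where "P k = (\<Sum>m<2*R. fps_nth (stirling_fps v k) m * z ^ m)" for k
  have radius_G: "ereal (norm z) < fps_conv_radius log_remainder_fps"
    using s by (intro less_le_trans[OF _ fps_conv_radius_log_remainder]) (simp add: z_def)
  have radius_B: "ereal (norm z) < fps_conv_radius (fps_binomial v)"
    using s by (simp add: z_def fps_conv_radius_binomial)
  have eval_stirling: "eval_fps (stirling_fps v k) z = b * G ^ k" for k
    using radius_B radius_G less_le_trans[OF radius_G fps_conv_radius_power]
    by (simp add: stirling_fps_def b_def G_def eval_fps_mult eval_fps_power)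
  have "b * (\<Sum>k<2*R. w ^ k / fact k) = (\<Sum>k<2*R. of_real ((N * s\<^sup>2) ^ k / fact k) * (b * G ^ k))"
    by (simp add: w_def G_def z_def power_mult_distrib sum_distrib_left mult_ac)
  then have poly: "stirling_poly v R N s =
      b * (\<Sum>k<2*R. w ^ k / fact k) - (\<Sum>k<2*R. of_real ((N * s\<^sup>2) ^ k / fact k) * (b * G ^ k - P k))"
    by (simp add: stirling_poly_def z_def P_def right_diff_distrib sum_subtractf)
  have "stirling_integrand v N s = of_real (exp (- N * s\<^sup>2 / 2)) * (b * exp w)"
    using stirling_integrand_eq[OF s] by (simp add: b_def w_def G_def z_def)
  then show ?thesis
    unfolding poly eval_stirling P_def[symmetric] b_def[symmetric] z_def[symmetric] by (simp add: algebra_simps)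
qed

(* CG * |s| <= 1/4 keeps |N s^2 G(s)| <= N s^2 / 4, so the exponential remainder is still damped
   by the Gaussian exp (- N s^2 / 4). *)
lemma stirling_integrand_minus_poly_le:
  fixes v :: complex and N s CB CG CW :: real
  assumes R: "R \<ge> 1" and s: "\<bar>s\<bar> < 1" and N: "N \<ge> 0" and CW: "CW \<ge> 0"
    and B: "norm (eval_fps (fps_binomial v) (of_real s)) \<le> CB"
    and G: "norm (eval_fps log_remainder_fps (of_real s)) \<le> CG * \<bar>s\<bar>" "CG * \<bar>s\<bar> \<le> 1 / 4"
    and P: "\<And>k. k < 2 * R \<Longrightarrow> norm (eval_fps (stirling_fps v k) (of_real s) -
              (\<Sum>m<2*R. fps_nth (stirling_fps v k) m * of_real s ^ m)) \<le> CW * \<bar>s\<bar> ^ (2 * R)"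
  shows "norm (stirling_integrand v N s - of_real (exp (- N * s\<^sup>2 / 2)) * stirling_poly v R N s)
    \<le> CB * CG ^ (2 * R) * (N ^ (2 * R) * s ^ (2 * (2 * R) + 2 * R) * exp (- N * s\<^sup>2 / 4))
      + CW * (\<Sum>k<2*R. N ^ k * s ^ (2 * k + 2 * R) * exp (- N * s\<^sup>2 / 4))"
proof -
  define b where "b = eval_fps (fps_binomial v) (of_real s)"
  define y where "y = N * s\<^sup>2"
  define w where "w = of_real y * eval_fps log_remainder_fps (of_real s)"
  define g where "g = exp (- N * s\<^sup>2 / 2)"
  define E where "E k = eval_fps (stirling_fps v k) (of_real s) - (\<Sum>m<2*R. fps_nth (stirling_fps v k) m * of_real s ^ m)" for k
  have y: "y \<ge> 0" using N by (simp add: y_def)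
  have CB: "CB \<ge> 0" using B by (rule order.trans[OF norm_ge_zero])
  have g: "g * exp (y / 4) = exp (- N * s\<^sup>2 / 4)" "0 < g" "g \<le> exp (- N * s\<^sup>2 / 4)"
    using N by (simp_all add: g_def y_def flip: exp_add)
  have norm_w: "norm w \<le> y * (CG * \<bar>s\<bar>)"
    using G y by (simp add: w_def norm_mult mult_left_mono)
  moreover have "y * (CG * \<bar>s\<bar>) \<le> y * (1 / 4)"
    using G(2) y by (rule mult_left_mono)
  ultimately have norm_w4: "norm w \<le> y / 4" by simp
  have "norm b * norm (exp w - (\<Sum>k<2*R. w ^ k / fact k)) \<le> CB * (exp (norm w) * norm w ^ (2 * R))"
    using B CB norm_exp_minus_trunc_le[of "2 * R" w] R by (intro mult_mono) (auto simp: b_def)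
  then have "norm (of_real g * (b * (exp w - (\<Sum>k<2*R. w ^ k / fact k))))
      \<le> g * CB * (exp (norm w) * norm w ^ (2 * R))"
    using g(2) by (simp add: norm_mult mult.assoc mult_left_mono)
  also have "\<dots> \<le> g * CB * (exp (y / 4) * (y * (CG * \<bar>s\<bar>)) ^ (2 * R))"
    using g CB norm_w norm_w4 y by (intro mult_left_mono mult_mono power_mono) auto
  also have "\<dots> = CB * (g * exp (y / 4)) * (y * (CG * \<bar>s\<bar>)) ^ (2 * R)"
    by (simp only: mult_ac)
  also have "(y * (CG * \<bar>s\<bar>)) ^ (2 * R) = CG ^ (2 * R) * (N ^ (2 * R) * s ^ (2 * (2 * R) + 2 * R))"
    using power_add[of s "4 * R" "2 * R"]
    by (simp add: y_def power_mult_distrib power_mult[symmetric] power_even_abs)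
  also have "CB * (g * exp (y / 4)) * (CG ^ (2 * R) * (N ^ (2 * R) * s ^ (2 * (2 * R) + 2 * R))) =
      CB * CG ^ (2 * R) * (N ^ (2 * R) * s ^ (2 * (2 * R) + 2 * R) * exp (- N * s\<^sup>2 / 4))"
    unfolding g(1) by (simp only: mult_ac)
  finally have exp_part: "norm (of_real g * (b * (exp w - (\<Sum>k<2*R. w ^ k / fact k))))
      \<le> CB * CG ^ (2 * R) * (N ^ (2 * R) * s ^ (2 * (2 * R) + 2 * R) * exp (- N * s\<^sup>2 / 4))" .
  have "norm (of_real (y ^ k / fact k) * E k) \<le> y ^ k / fact k * (CW * \<bar>s\<bar> ^ (2 * R))" if "k < 2 * R" for k
  proof -
    have "norm (of_real (y ^ k / fact k) * E k) = y ^ k / fact k * norm (E k)"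
      unfolding norm_mult norm_of_real using y by simp
    also have "\<dots> \<le> y ^ k / fact k * (CW * \<bar>s\<bar> ^ (2 * R))"
      using P[OF that] y unfolding E_def by (intro mult_left_mono) simp_all
    finally show ?thesis .
  qed
  then have "norm (of_real g * (\<Sum>k<2*R. of_real (y ^ k / fact k) * E k))
      \<le> g * (\<Sum>k<2*R. y ^ k / fact k * (CW * \<bar>s\<bar> ^ (2 * R)))"
    using g by (auto simp: norm_mult intro!: mult_left_mono order.trans[OF norm_sum] sum_mono)
  also have "\<dots> \<le> CW * (\<Sum>k<2*R. N ^ k * s ^ (2 * k + 2 * R) * exp (- N * s\<^sup>2 / 4))"
    unfolding sum_distrib_left
  proof (rule sum_mono)
    fix k
    have "y ^ k / fact k \<le> y ^ k / 1"
      using y by (intro divide_left_mono) (simp_all add: fact_ge_1)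
    then have "g * (y ^ k / fact k * (CW * \<bar>s\<bar> ^ (2 * R))) \<le> exp (- N * s\<^sup>2 / 4) * (y ^ k * (CW * \<bar>s\<bar> ^ (2 * R)))"
      using g y CW by (intro mult_mono) auto
    then show "g * (y ^ k / fact k * (CW * \<bar>s\<bar> ^ (2 * R))) \<le> CW * (N ^ k * s ^ (2 * k + 2 * R) * exp (- N * s\<^sup>2 / 4))"
      by (simp add: y_def power_mult_distrib power_add power_mult[symmetric] power_even_abs mult_ac)
  qed
  finally have poly_part: "norm (of_real g * (\<Sum>k<2*R. of_real (y ^ k / fact k) * E k))
      \<le> CW * (\<Sum>k<2*R. N ^ k * s ^ (2 * k + 2 * R) * exp (- N * s\<^sup>2 / 4))" .
  have "stirling_integrand v N s - of_real g * stirling_poly v R N s =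
      of_real g * (b * (exp w - (\<Sum>k<2*R. w ^ k / fact k))) + of_real g * (\<Sum>k<2*R. of_real (y ^ k / fact k) * E k)"
    unfolding g_def b_def w_def y_def E_def by (rule stirling_integrand_minus_poly_eq[OF s])
  then show ?thesis
    unfolding g_def[symmetric] using exp_part poly_part by (simp add: norm_triangle_le add_mono)
qed

lemma stirling_series_bounds:
  fixes v :: complex and R :: nat
  obtains CB CG CW where "0 \<le> CB"
    "\<And>z. norm z \<le> 1 / 2 \<Longrightarrow> norm (eval_fps (fps_binomial v) z) \<le> CB"
    "\<And>z. norm z \<le> 1 / 2 \<Longrightarrow> norm (eval_fps log_remainder_fps z) \<le> CG * norm z"
    "0 \<le> CW" "\<And>k z. k < 2 * R \<Longrightarrow> norm z \<le> 1 / 2 \<Longrightarrow> norm (eval_fps (stirling_fps v k) z -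
       (\<Sum>m<2*R. fps_nth (stirling_fps v k) m * z ^ m)) \<le> CW * norm z ^ (2 * R)"
proof -
  have half: "ereal (1 / 2) < fps_conv_radius f" if "fps_conv_radius f \<ge> 1" for f :: "complex fps"
    using that by (rule less_le_trans[rotated]) simp
  have radius_binomial: "fps_conv_radius (fps_binomial v) \<ge> 1"
    by (simp add: fps_conv_radius_binomial)
  obtain CB where "\<And>z. norm z \<le> 1 / 2 \<Longrightarrow>
      norm (eval_fps (fps_binomial v) z - (\<Sum>m<0. fps_nth (fps_binomial v) m * z ^ m)) \<le> CB * norm z ^ 0"
    using eval_fps_minus_trunc_bound[OF half[OF radius_binomial], where M = 0] by blast
  then have CB: "norm (eval_fps (fps_binomial v) z) \<le> CB" if "norm z \<le> 1 / 2" for z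
    using that by simp
  obtain CG where "\<And>z. norm z \<le> 1 / 2 \<Longrightarrow>
      norm (eval_fps log_remainder_fps z - (\<Sum>m<1. fps_nth log_remainder_fps m * z ^ m)) \<le> CG * norm z ^ 1"
    using eval_fps_minus_trunc_bound[OF half[OF fps_conv_radius_log_remainder], where M = 1] by blast
  then have CG: "norm (eval_fps log_remainder_fps z) \<le> CG * norm z" if "norm z \<le> 1 / 2" for z
    using that by (simp add: log_remainder_fps_def)
  have "\<exists>C. \<forall>z. norm z \<le> 1 / 2 \<longrightarrow> norm (eval_fps (stirling_fps v k) z -
      (\<Sum>m<2*R. fps_nth (stirling_fps v k) m * z ^ m)) \<le> C * norm z ^ (2 * R)" for k
  proof -
    obtain C where "\<And>z. norm z \<le> 1 / 2 \<Longrightarrow> norm (eval_fps (stirling_fps v k) z -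
        (\<Sum>m<2*R. fps_nth (stirling_fps v k) m * z ^ m)) \<le> C * norm z ^ (2 * R)"
      using eval_fps_minus_trunc_bound[OF half[OF fps_conv_radius_stirling_fps], where M = "2 * R"] by blast
    then show ?thesis by blast
  qed
  then obtain CP where CP: "\<And>k z. norm z \<le> 1 / 2 \<Longrightarrow> norm (eval_fps (stirling_fps v k) z -
      (\<Sum>m<2*R. fps_nth (stirling_fps v k) m * z ^ m)) \<le> CP k * norm z ^ (2 * R)"
    by metis
  define CW where "CW = (\<Sum>k<2*R. \<bar>CP k\<bar>)"
  have CW: "norm (eval_fps (stirling_fps v k) z - (\<Sum>m<2*R. fps_nth (stirling_fps v k) m * z ^ m))
      \<le> CW * norm z ^ (2 * R)" if "k < 2 * R" "norm z \<le> 1 / 2" for k z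
  proof -
    have "\<bar>CP k\<bar> \<le> CW"
      unfolding CW_def using that(1) by (intro member_le_sum) auto
    then have "CP k * norm z ^ (2 * R) \<le> CW * norm z ^ (2 * R)"
      by (intro mult_right_mono) (simp_all add: abs_le_iff)
    with CP[OF that(2), of k] show ?thesis by (rule order.trans)
  qed
  have "CB \<ge> 0" using order.trans[OF norm_ge_zero CB[of 0]] by simp
  have "0 \<le> CW"
    unfolding CW_def by (intro sum_nonneg) simp
  show ?thesis
    using \<open>CB \<ge> 0\<close> CB CG \<open>0 \<le> CW\<close> CW by (rule that)
qed

lemma stirling_integrand_local_bound:
  fixes v :: complex
  assumes R: "R \<ge> 1"
  obtains \<delta> C where "0 < \<delta>" "\<delta> < 1" "0 \<le> C"
    "\<And>N s. 0 \<le> N \<Longrightarrow> \<bar>s\<bar> \<le> \<delta> \<Longrightarrow>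
       norm (stirling_integrand v N s - of_real (exp (- N * s\<^sup>2 / 2)) * stirling_poly v R N s)
         \<le> C * (\<Sum>j\<le>2*R. N ^ j * s ^ (2 * j + 2 * R) * exp (- N * s\<^sup>2 / 4))"
proof -
  obtain CB CG CW where bounds: "0 \<le> CB"
    "\<And>z. norm z \<le> 1 / 2 \<Longrightarrow> norm (eval_fps (fps_binomial v) z) \<le> CB"
    "\<And>z. norm z \<le> 1 / 2 \<Longrightarrow> norm (eval_fps log_remainder_fps z) \<le> CG * norm z"
    "0 \<le> CW" "\<And>k z. k < 2 * R \<Longrightarrow> norm z \<le> 1 / 2 \<Longrightarrow> norm (eval_fps (stirling_fps v k) z -
       (\<Sum>m<2*R. fps_nth (stirling_fps v k) m * z ^ m)) \<le> CW * norm z ^ (2 * R)"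
    by (rule stirling_series_bounds[of v R]) blast
  define \<delta> where "\<delta> = 1 / (4 * (\<bar>CG\<bar> + 2))"
  define C where "C = CB * CG ^ (2 * R) + CW"
  show ?thesis
  proof
    show "0 < \<delta>" "\<delta> < 1" by (auto simp: \<delta>_def field_simps)
    show "0 \<le> C" using bounds(1,4) by (simp add: C_def zero_le_even_power)
    fix N s :: real assume N: "0 \<le> N" and s: "\<bar>s\<bar> \<le> \<delta>"
    have "\<delta> \<le> 1 / 8" by (simp add: \<delta>_def field_simps)
    then have s2: "\<bar>s\<bar> \<le> 1 / 2" "\<bar>s\<bar> < 1" using s by simp_all
    have "CG * \<bar>s\<bar> \<le> \<bar>CG\<bar> * \<delta>"
      using s mult_mono[OF abs_ge_self[of CG] s] by simp
    also have "\<dots> \<le> 1 / 4" by (simp add: \<delta>_def field_simps)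
    finally have CGs: "CG * \<bar>s\<bar> \<le> 1 / 4" .
    define X where "X j = N ^ j * s ^ (2 * j + 2 * R) * exp (- N * s\<^sup>2 / 4)" for j
    have X: "0 \<le> X j" for j using N by (simp add: X_def zero_le_even_power)
    have "norm (stirling_integrand v N s - of_real (exp (- N * s\<^sup>2 / 2)) * stirling_poly v R N s)
        \<le> CB * CG ^ (2 * R) * X (2 * R) + CW * (\<Sum>k<2*R. X k)"
      unfolding X_def using R s2(2) N
    proof (rule stirling_integrand_minus_poly_le)
      show "norm (eval_fps (fps_binomial v) (of_real s)) \<le> CB" using s2 by (intro bounds(2)) simp
      show "norm (eval_fps log_remainder_fps (of_real s)) \<le> CG * \<bar>s\<bar>" using s2 bounds(3)[of "of_real s"] by simp
      show "norm (eval_fps (stirling_fps v k) (of_real s) - (\<Sum>m<2*R. fps_nth (stirling_fps v k) m * of_real s ^ m))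
          \<le> CW * \<bar>s\<bar> ^ (2 * R)" if "k < 2 * R" for k
        using bounds(5)[OF that, of "of_real s"] s2 by simp
    qed (use CGs bounds(4) in simp_all)
    also have "\<dots> \<le> CB * CG ^ (2 * R) * (\<Sum>j\<le>2*R. X j) + CW * (\<Sum>j\<le>2*R. X j)"
    proof (rule add_mono)
      have "X (2 * R) \<le> (\<Sum>j\<le>2*R. X j)" using X by (intro member_le_sum) auto
      then show "CB * CG ^ (2 * R) * X (2 * R) \<le> CB * CG ^ (2 * R) * (\<Sum>j\<le>2*R. X j)"
        by (rule mult_left_mono) (simp add: bounds(1) zero_le_even_power)
      have "(\<Sum>k<2*R. X k) \<le> (\<Sum>j\<le>2*R. X j)" using X by (intro sum_mono2) auto
      then show "CW * (\<Sum>k<2*R. X k) \<le> CW * (\<Sum>j\<le>2*R. X j)"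
        by (rule mult_left_mono) (simp add: bounds(4))
    qed
    finally show "norm (stirling_integrand v N s - of_real (exp (- N * s\<^sup>2 / 2)) * stirling_poly v R N s)
        \<le> C * (\<Sum>j\<le>2*R. N ^ j * s ^ (2 * j + 2 * R) * exp (- N * s\<^sup>2 / 4))"
      by (simp add: C_def X_def algebra_simps)
  qed
qed

lemma self_minus_ln_one_plus_ge:
  fixes \<delta> s :: real
  assumes \<delta>: "0 < \<delta>" "\<delta> < 1" and s: "s > -1" "\<bar>s\<bar> \<ge> \<delta>"
  shows "s - ln (1 + s) \<ge> min (\<delta> - ln (1 + \<delta>)) (- \<delta> - ln (1 - \<delta>))"
proof (cases "s \<ge> 0")
  case True
  have "ln (1 + s) - ln (1 + \<delta>) = ln ((1 + s) / (1 + \<delta>))"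
    using s \<delta> by (simp add: ln_div)
  also have "\<dots> \<le> (1 + s) / (1 + \<delta>) - 1"
    using s \<delta> by (intro ln_le_minus_one) simp
  also have "\<dots> = (s - \<delta>) / (1 + \<delta>)"
    using \<delta> by (simp add: field_simps)
  also have "\<dots> \<le> (s - \<delta>) / 1"
    using True s \<delta> by (intro divide_left_mono) auto
  finally show ?thesis by simp
next
  case False
  have "ln (1 + s) - ln (1 - \<delta>) = ln ((1 + s) / (1 - \<delta>))"
    using s \<delta> by (simp add: ln_div)
  also have "\<dots> \<le> (1 + s) / (1 - \<delta>) - 1"
    using s \<delta> by (intro ln_le_minus_one) simp
  also have "\<dots> = (s + \<delta>) / (1 - \<delta>)"
    using \<delta> by (simp add: field_simps)
  also have "\<dots> \<le> (s + \<delta>) / 1"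
    using False s \<delta> by (intro divide_left_mono_neg) auto
  finally show ?thesis by simp
qed

lemma stirling_integrand_tail_bound:
  fixes v :: complex and \<delta> :: real
  assumes \<delta>: "0 < \<delta>" "\<delta> < 1"
  obtains c where "c > 0"
    "\<And>N N0 s. N0 \<le> N \<Longrightarrow> \<delta> \<le> \<bar>s\<bar> \<Longrightarrow>
       norm (stirling_integrand v N s) \<le> exp (- (N - N0) * c) * norm (stirling_integrand v N0 s)"
proof
  define c where "c = min (\<delta> - ln (1 + \<delta>)) (- \<delta> - ln (1 - \<delta>))"
  have "ln (1 - \<delta>) < - \<delta>"
    using \<delta> ln_le_minus_one[of "1 - \<delta>"] ln_eq_minus_one[of "1 - \<delta>"] by fastforce
  then show "c > 0"
    using \<delta> ln_add_one_self_less_self[of \<delta>] by (simp add: c_def)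
  fix N N0 s :: real assume N: "N0 \<le> N" and s: "\<delta> \<le> \<bar>s\<bar>"
  show "norm (stirling_integrand v N s) \<le> exp (- (N - N0) * c) * norm (stirling_integrand v N0 s)"
  proof (cases "s > -1")
    case True
    then have "(N - N0) * c \<le> (N - N0) * (s - ln (1 + s))"
      using N s \<delta> unfolding c_def by (intro mult_left_mono self_minus_ln_one_plus_ge) auto
    then show ?thesis
      using True by (simp add: norm_stirling_integrand algebra_simps flip: exp_add)
  qed (simp add: norm_stirling_integrand)
qed

lemma norm_gauss_stirling_poly_tail_le:
  fixes v :: complex and N \<delta> s :: real
  assumes N: "1 \<le> N" and s: "0 \<le> \<delta>" "\<delta> \<le> \<bar>s\<bar>"
  shows "norm (of_real (exp (- N * s\<^sup>2 / 2)) * stirling_poly v R N s) \<le> exp (- (N - 1) * \<delta>\<^sup>2 / 2) *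
    (\<Sum>k<2*R. \<Sum>m<2*R. norm (fps_nth (stirling_fps v k) m) * (N ^ k / fact k * (exp (- s\<^sup>2 / 2) * \<bar>s\<bar> ^ (2 * k + m))))"
proof -
  have "\<delta>\<^sup>2 \<le> s\<^sup>2" using s by (metis abs_le_square_iff abs_of_nonneg)
  then have "(N - 1) * \<delta>\<^sup>2 \<le> (N - 1) * s\<^sup>2" using N by (intro mult_left_mono) auto
  then have gauss: "exp (- N * s\<^sup>2 / 2) \<le> exp (- (N - 1) * \<delta>\<^sup>2 / 2) * exp (- s\<^sup>2 / 2)"
    by (simp add: algebra_simps flip: exp_add)
  have "norm (of_real (exp (- N * s\<^sup>2 / 2)) * stirling_poly v R N s) \<le>
      (\<Sum>k<2*R. \<Sum>m<2*R. norm (fps_nth (stirling_fps v k) m *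
         of_real (N ^ k / fact k * (exp (- N * s\<^sup>2 / 2) * s ^ (2 * k + m)))))"
    unfolding gauss_stirling_poly_eq_sum by (rule order.trans[OF norm_sum sum_mono[OF norm_sum]])
  also have "\<dots> = (\<Sum>k<2*R. \<Sum>m<2*R. norm (fps_nth (stirling_fps v k) m) *
      (N ^ k / fact k * (exp (- N * s\<^sup>2 / 2) * \<bar>s\<bar> ^ (2 * k + m))))"
  proof -
    have "\<bar>N ^ k / fact k * (exp (- N * s\<^sup>2 / 2) * s ^ (2 * k + m))\<bar> =
        N ^ k / fact k * (exp (- N * s\<^sup>2 / 2) * \<bar>s\<bar> ^ (2 * k + m))" for k m
      using N by (simp add: abs_mult power_abs)
    then show ?thesis by (simp only: norm_mult norm_of_real)
  qed
  also have "\<dots> \<le> (\<Sum>k<2*R. \<Sum>m<2*R. norm (fps_nth (stirling_fps v k) m) * (N ^ k / fact k *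
      (exp (- (N - 1) * \<delta>\<^sup>2 / 2) * exp (- s\<^sup>2 / 2) * \<bar>s\<bar> ^ (2 * k + m))))"
  proof (intro sum_mono)
    fix k m
    have "exp (- N * s\<^sup>2 / 2) * \<bar>s\<bar> ^ (2 * k + m) \<le>
        exp (- (N - 1) * \<delta>\<^sup>2 / 2) * exp (- s\<^sup>2 / 2) * \<bar>s\<bar> ^ (2 * k + m)"
      using gauss by (rule mult_right_mono) simp
    then have "N ^ k / fact k * (exp (- N * s\<^sup>2 / 2) * \<bar>s\<bar> ^ (2 * k + m)) \<le>
        N ^ k / fact k * (exp (- (N - 1) * \<delta>\<^sup>2 / 2) * exp (- s\<^sup>2 / 2) * \<bar>s\<bar> ^ (2 * k + m))"
      by (rule mult_left_mono) (use N in simp)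
    then show "norm (fps_nth (stirling_fps v k) m) * (N ^ k / fact k * (exp (- N * s\<^sup>2 / 2) * \<bar>s\<bar> ^ (2 * k + m)))
        \<le> norm (fps_nth (stirling_fps v k) m) * (N ^ k / fact k *
          (exp (- (N - 1) * \<delta>\<^sup>2 / 2) * exp (- s\<^sup>2 / 2) * \<bar>s\<bar> ^ (2 * k + m)))"
      by (rule mult_left_mono) simp
  qed
  finally show ?thesis by (simp add: sum_distrib_left mult_ac)
qed

lemma bigo_norm_integral_dominated:
  fixes f :: "'a \<Rightarrow> 'b \<Rightarrow> 'c::{banach, second_countable_topology}" and g :: "'a \<Rightarrow> 'b \<Rightarrow> real"
  assumes "\<forall>\<^sub>F x in F. integrable M (f x) \<and> integrable M (g x) \<and> (\<forall>y\<in>space M. norm (f x y) \<le> g x y)"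
    and "(\<lambda>x. integral\<^sup>L M (g x)) \<in> O[F](h)"
  shows "(\<lambda>x. norm (integral\<^sup>L M (f x))) \<in> O[F](h)"
proof -
  have "(\<lambda>x. norm (integral\<^sup>L M (f x))) \<in> O[F](\<lambda>x. integral\<^sup>L M (g x))"
  proof (rule bigoI[where c = 1])
    show "\<forall>\<^sub>F x in F. norm (norm (integral\<^sup>L M (f x))) \<le> 1 * norm (integral\<^sup>L M (g x))"
      using assms(1)
    proof eventually_elim
      case (elim x)
      then have "norm (integral\<^sup>L M (f x)) \<le> integral\<^sup>L M (g x)"
        by (intro order.trans[OF integral_norm_bound integral_mono]) (auto intro: integrable_norm)
      then show ?case by simp
    qed
  qed
  then show ?thesis using assms(2) by (rule landau_o.big.trans)
qed

lemma gauss_moment_power_bigo: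
  "(\<lambda>N. N ^ j * gauss_moment (N / 2) (2 * j + 2 * R)) \<in> O(\<lambda>N. 1 / (N ^ R * sqrt N))"
proof -
  define K where "K = gauss_moment 1 (2 * j + 2 * R) * 2 ^ (j + R) * sqrt 2"
  have "\<forall>\<^sub>F N in at_top. N ^ j * gauss_moment (N / 2) (2 * j + 2 * R) = K * (1 / (N ^ R * sqrt N))"
    using eventually_gt_at_top[of 0]
  proof eventually_elim
    case (elim N)
    then show ?case
      by (simp add: K_def gauss_moment_scale[of "N / 2"] real_sqrt_divide power_divide power_add field_simps)
  qed
  moreover have "(\<lambda>N. K * (1 / (N ^ R * sqrt N))) \<in> O(\<lambda>N. 1 / (N ^ R * sqrt N))"
    unfolding cmult_in_bigo_iff by simp
  ultimately show ?thesis by (subst landau_o.big.in_cong)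
qed

lemma exp_decay_bigo: "c > 0 \<Longrightarrow> (\<lambda>N::real. exp (- (N - a) * c) * N ^ k) \<in> O(\<lambda>N. 1 / (N ^ R * sqrt N))"
  by real_asymp

definition stirling_majorant :: "complex \<Rightarrow> nat \<Rightarrow> real \<Rightarrow> real \<Rightarrow> real \<Rightarrow> real \<Rightarrow> real \<Rightarrow> real" where
  "stirling_majorant v R C c \<delta> N s =
     C * (\<Sum>j\<le>2*R. N ^ j * s ^ (2 * j + 2 * R) * exp (- N * s\<^sup>2 / 4))
     + exp (- (N - (\<bar>Re v\<bar> + 1)) * c) * norm (stirling_integrand v (\<bar>Re v\<bar> + 1) s)
     + exp (- (N - 1) * \<delta>\<^sup>2 / 2) * (\<Sum>k<2*R. \<Sum>m<2*R.
         norm (fps_nth (stirling_fps v k) m) / fact k * N ^ k * (exp (- s\<^sup>2 / 2) * \<bar>s\<bar> ^ (2 * k + m)))"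

lemma norm_stirling_error_le_majorant:
  fixes v :: complex and R :: nat
  assumes R: "R \<ge> 1"
  obtains C c \<delta> where "0 < c" "0 < \<delta>"
    "\<And>N s. \<bar>Re v\<bar> + 1 \<le> N \<Longrightarrow>
       norm (stirling_integrand v N s - of_real (exp (- N * s\<^sup>2 / 2)) * stirling_poly v R N s)
         \<le> stirling_majorant v R C c \<delta> N s"
proof -
  obtain \<delta> C where \<delta>: "0 < \<delta>" "\<delta> < 1" and C: "0 \<le> C"
    and local: "\<And>N s. 0 \<le> N \<Longrightarrow> \<bar>s\<bar> \<le> \<delta> \<Longrightarrow>
      norm (stirling_integrand v N s - of_real (exp (- N * s\<^sup>2 / 2)) * stirling_poly v R N s)
        \<le> C * (\<Sum>j\<le>2*R. N ^ j * s ^ (2 * j + 2 * R) * exp (- N * s\<^sup>2 / 4))"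
    using stirling_integrand_local_bound[OF R] by blast
  obtain c where c: "c > 0" and tail: "\<And>N N0 s. N0 \<le> N \<Longrightarrow> \<delta> \<le> \<bar>s\<bar> \<Longrightarrow>
      norm (stirling_integrand v N s) \<le> exp (- (N - N0) * c) * norm (stirling_integrand v N0 s)"
    using stirling_integrand_tail_bound[OF \<delta>] by blast
  show ?thesis
  proof (rule that[OF c \<delta>(1)])
    fix N s :: real assume N: "\<bar>Re v\<bar> + 1 \<le> N"
    then have N1: "1 \<le> N" by linarith
    define L where "L = C * (\<Sum>j\<le>2*R. N ^ j * s ^ (2 * j + 2 * R) * exp (- N * s\<^sup>2 / 4))"
    define T1 where "T1 = exp (- (N - (\<bar>Re v\<bar> + 1)) * c) * norm (stirling_integrand v (\<bar>Re v\<bar> + 1) s)"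
    define T2 where "T2 = exp (- (N - 1) * \<delta>\<^sup>2 / 2) * (\<Sum>k<2*R. \<Sum>m<2*R.
        norm (fps_nth (stirling_fps v k) m) / fact k * N ^ k * (exp (- s\<^sup>2 / 2) * \<bar>s\<bar> ^ (2 * k + m)))"
    have "0 \<le> N ^ j * s ^ (2 * j + 2 * R) * exp (- N * s\<^sup>2 / 4)" for j
      using N1 by (simp add: zero_le_even_power)
    then have "0 \<le> L"
      unfolding L_def by (intro mult_nonneg_nonneg[OF C] sum_nonneg)
    moreover have "0 \<le> T1" "0 \<le> T2"
      using N1 unfolding T1_def T2_def by (auto intro!: mult_nonneg_nonneg sum_nonneg)
    moreover have "stirling_majorant v R C c \<delta> N s = L + T1 + T2"
      by (simp add: stirling_majorant_def L_def T1_def T2_def)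
    moreover have "norm (stirling_integrand v N s - of_real (exp (- N * s\<^sup>2 / 2)) * stirling_poly v R N s)
        \<le> (if \<bar>s\<bar> \<le> \<delta> then L else T1 + T2)"
    proof (cases "\<bar>s\<bar> \<le> \<delta>")
      case True
      then show ?thesis using local[of N s] N1 by (simp add: L_def)
    next
      case False
      have "norm (of_real (exp (- N * s\<^sup>2 / 2)) * stirling_poly v R N s) \<le> exp (- (N - 1) * \<delta>\<^sup>2 / 2) *
          (\<Sum>k<2*R. \<Sum>m<2*R. norm (fps_nth (stirling_fps v k) m) *
            (N ^ k / fact k * (exp (- s\<^sup>2 / 2) * \<bar>s\<bar> ^ (2 * k + m))))"
        using N1 False \<delta> by (intro norm_gauss_stirling_poly_tail_le) auto
      also have "\<dots> = T2"
        by (simp add: T2_def mult_ac)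
      finally have "norm (of_real (exp (- N * s\<^sup>2 / 2)) * stirling_poly v R N s) \<le> T2" .
      moreover have "norm (stirling_integrand v N s) \<le> T1"
        unfolding T1_def using N False by (intro tail) auto
      ultimately have "norm (stirling_integrand v N s) + norm (of_real (exp (- N * s\<^sup>2 / 2)) * stirling_poly v R N s)
          \<le> T1 + T2" by linarith
      then show ?thesis
        using False norm_triangle_ineq4[of "stirling_integrand v N s" "of_real (exp (- N * s\<^sup>2 / 2)) * stirling_poly v R N s"]
        by simp
    qed
    ultimately show "norm (stirling_integrand v N s - of_real (exp (- N * s\<^sup>2 / 2)) * stirling_poly v R N s)
        \<le> stirling_majorant v R C c \<delta> N s"
      by (auto split: if_splits)
  qed
qed

lemma has_bochner_integral_stirling_majorant:
  fixes v :: complex and N :: real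
  assumes N: "N > 0"
  shows "has_bochner_integral lebesgue (stirling_majorant v R C c \<delta> N)
    (C * (\<Sum>j\<le>2*R. N ^ j * gauss_moment (N / 2) (2 * j + 2 * R))
     + exp (- (N - (\<bar>Re v\<bar> + 1)) * c) * integral\<^sup>L lebesgue (\<lambda>s. norm (stirling_integrand v (\<bar>Re v\<bar> + 1) s))
     + exp (- (N - 1) * \<delta>\<^sup>2 / 2) * (\<Sum>k<2*R. \<Sum>m<2*R. norm (fps_nth (stirling_fps v k) m) / fact k * N ^ k *
         integral\<^sup>L lebesgue (\<lambda>s::real. exp (- s\<^sup>2 / 2) * \<bar>s\<bar> ^ (2 * k + m))))"
proof -
  have "has_bochner_integral lebesgue (\<lambda>s. N ^ j * (exp (- (N / 2) * s\<^sup>2 / 2) * s ^ (2 * j + 2 * R)))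
      (N ^ j * gauss_moment (N / 2) (2 * j + 2 * R))" for j
    using N by (intro has_bochner_integral_mult_right has_bochner_integral_gauss_moment) simp
  moreover have "0 < \<bar>Re v\<bar> + 1" "0 < (\<bar>Re v\<bar> + 1) + Re v + 1"
    using abs_ge_minus_self[of "Re v"] by linarith+
  then have "integrable lebesgue (stirling_integrand v (\<bar>Re v\<bar> + 1))"
    by (rule has_bochner_integral_stirling_integrand[THEN integrable.intros])
  ultimately show ?thesis
    unfolding stirling_majorant_def
    by (intro has_bochner_integral_add has_bochner_integral_mult_right has_bochner_integral_sum
        has_bochner_integral_integrable integrable_norm integrable_gauss_abs_moment)
      (simp_all add: mult_ac)
qed

lemma stirling_majorant_integral_bigo:
  fixes v :: complex
  assumes c: "0 < c" and \<delta>: "0 < \<delta>"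
  shows "(\<lambda>N. integral\<^sup>L lebesgue (stirling_majorant v R C c \<delta> N)) \<in> O(\<lambda>N. 1 / (N ^ R * sqrt N))"
proof -
  define M where "M p = integral\<^sup>L lebesgue (\<lambda>s::real. exp (- s\<^sup>2 / 2) * \<bar>s\<bar> ^ p)" for p
  define a where "a k m = norm (fps_nth (stirling_fps v k) m) / fact k" for k m
  have "(\<lambda>N. \<Sum>j\<le>2*R. N ^ j * gauss_moment (N / 2) (2 * j + 2 * R)) \<in> O(\<lambda>N. 1 / (N ^ R * sqrt N))"
    by (intro big_sum_in_bigo gauss_moment_power_bigo)
  moreover have "(\<lambda>N. exp (- (N - (\<bar>Re v\<bar> + 1)) * c) * integral\<^sup>L lebesgue (\<lambda>s. norm (stirling_integrand v (\<bar>Re v\<bar> + 1) s)))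
      \<in> O(\<lambda>N. 1 / (N ^ R * sqrt N))"
    using exp_decay_bigo[OF c, of "\<bar>Re v\<bar> + 1" 0 R] by simp
  moreover have "\<delta>\<^sup>2 / 2 > 0" using \<delta> by simp
  note decay = exp_decay_bigo[OF this, of 1 _ R]
  have "(\<lambda>N. \<Sum>k<2*R. \<Sum>m<2*R. a k m * M (2 * k + m) * (exp (- (N - 1) * (\<delta>\<^sup>2 / 2)) * N ^ k))
      \<in> O(\<lambda>N. 1 / (N ^ R * sqrt N))"
    by (intro big_sum_in_bigo) (simp only: cmult_in_bigo_iff decay simp_thms)
  then have "(\<lambda>N. exp (- (N - 1) * \<delta>\<^sup>2 / 2) * (\<Sum>k<2*R. \<Sum>m<2*R. a k m * N ^ k * M (2 * k + m)))
      \<in> O(\<lambda>N. 1 / (N ^ R * sqrt N))"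
    by (simp add: sum_distrib_left mult_ac)
  ultimately have "(\<lambda>N. C * (\<Sum>j\<le>2*R. N ^ j * gauss_moment (N / 2) (2 * j + 2 * R))
      + exp (- (N - (\<bar>Re v\<bar> + 1)) * c) * integral\<^sup>L lebesgue (\<lambda>s. norm (stirling_integrand v (\<bar>Re v\<bar> + 1) s))
      + exp (- (N - 1) * \<delta>\<^sup>2 / 2) * (\<Sum>k<2*R. \<Sum>m<2*R. a k m * N ^ k * M (2 * k + m)))
    \<in> O(\<lambda>N. 1 / (N ^ R * sqrt N))"
    by (intro sum_in_bigo) simp_all
  moreover have "\<forall>\<^sub>F N in at_top. integral\<^sup>L lebesgue (stirling_majorant v R C c \<delta> N) =
      C * (\<Sum>j\<le>2*R. N ^ j * gauss_moment (N / 2) (2 * j + 2 * R))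
      + exp (- (N - (\<bar>Re v\<bar> + 1)) * c) * integral\<^sup>L lebesgue (\<lambda>s. norm (stirling_integrand v (\<bar>Re v\<bar> + 1) s))
      + exp (- (N - 1) * \<delta>\<^sup>2 / 2) * (\<Sum>k<2*R. \<Sum>m<2*R. a k m * N ^ k * M (2 * k + m))"
    using eventually_gt_at_top[of 0]
    by eventually_elim (simp add: a_def M_def has_bochner_integral_integral_eq[OF has_bochner_integral_stirling_majorant])
  ultimately show ?thesis by (subst landau_o.big.in_cong)
qed

lemma stirling_integral_asymptotics:
  fixes v :: complex and R :: nat
  assumes R: "R \<ge> 1"
  shows "(\<lambda>N. norm (integral\<^sup>L lebesgue (stirling_integrand v N) -
      of_real (sqrt (2 * pi / N)) * (\<Sum>r<R. gamma_coeff r v / of_real N ^ r)))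
    \<in> O(\<lambda>N. 1 / (N ^ R * sqrt N))"
proof -
  obtain C c \<delta> where c: "0 < c" and \<delta>: "0 < \<delta>"
    and majorant: "\<And>N s. \<bar>Re v\<bar> + 1 \<le> N \<Longrightarrow>
      norm (stirling_integrand v N s - of_real (exp (- N * s\<^sup>2 / 2)) * stirling_poly v R N s)
        \<le> stirling_majorant v R C c \<delta> N s"
    by (rule norm_stirling_error_le_majorant[OF R]) blast
  have N: "N > 0" "N + Re v + 1 > 0" if "\<bar>Re v\<bar> + 1 \<le> N" for N
    using that abs_ge_minus_self[of "Re v"] by linarith+
  have "(\<lambda>N. norm (integral\<^sup>L lebesgue (\<lambda>s. stirling_integrand v N s -
      of_real (exp (- N * s\<^sup>2 / 2)) * stirling_poly v R N s))) \<in> O(\<lambda>N. 1 / (N ^ R * sqrt N))"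
  proof (rule bigo_norm_integral_dominated[OF _ stirling_majorant_integral_bigo[OF c \<delta>]])
    show "\<forall>\<^sub>F N in at_top. integrable lebesgue (\<lambda>s. stirling_integrand v N s -
        of_real (exp (- N * s\<^sup>2 / 2)) * stirling_poly v R N s) \<and> integrable lebesgue (stirling_majorant v R C c \<delta> N) \<and>
        (\<forall>s\<in>space lebesgue. norm (stirling_integrand v N s -
          of_real (exp (- N * s\<^sup>2 / 2)) * stirling_poly v R N s) \<le> stirling_majorant v R C c \<delta> N s)"
      using eventually_ge_at_top[of "\<bar>Re v\<bar> + 1"]
    proof eventually_elim
      case (elim N)
      have "integrable lebesgue (\<lambda>s. stirling_integrand v N s - of_real (exp (- N * s\<^sup>2 / 2)) * stirling_poly v R N s)"
        using has_bochner_integral_stirling_integrand[OF N[OF elim]]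
          has_bochner_integral_gauss_stirling_poly[OF N(1)[OF elim], of v R]
        by (intro Bochner_Integration.integrable_diff) (auto intro: integrable.intros)
      moreover have "integrable lebesgue (stirling_majorant v R C c \<delta> N)"
        using has_bochner_integral_stirling_majorant[OF N(1)[OF elim]] by (rule integrable.intros)
      ultimately show ?case using majorant[OF elim] by blast
    qed
  qed
  moreover have "\<forall>\<^sub>F N in at_top. integral\<^sup>L lebesgue (\<lambda>s. stirling_integrand v N s -
      of_real (exp (- N * s\<^sup>2 / 2)) * stirling_poly v R N s) =
      integral\<^sup>L lebesgue (stirling_integrand v N) - of_real (sqrt (2 * pi / N)) * (\<Sum>r<R. gamma_coeff r v / of_real N ^ r)"
    using eventually_ge_at_top[of "\<bar>Re v\<bar> + 1"]
  proof eventually_elim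
    case (elim N)
    note integrand = has_bochner_integral_stirling_integrand[OF N[OF elim]]
    show ?case
      using has_bochner_integral_diff[OF integrand has_bochner_integral_gauss_stirling_poly[OF N(1)[OF elim], of v R]]
      by (simp add: has_bochner_integral_integral_eq[OF integrand] has_bochner_integral_integral_eq)
  qed
  ultimately show ?thesis
    by (subst (asm) landau_o.big.in_cong) (auto elim: eventually_mono)
qed

lemma Gamma_minus_stirling_expansion_eq:
  fixes v :: complex and N :: real
  assumes R: "R \<ge> 1" and N: "N > 0" "N + Re v + 1 > 0"
  shows "Gamma (of_real N + v + 1)
      - of_real (sqrt (2 * pi * N)) * exp ((of_real N + v) * of_real (ln N)) / of_real (exp N)
        * (1 + (\<Sum>r = 1..<R. gamma_coeff r v / of_real N ^ r))
    = of_real N * (exp ((of_real N + v) * of_real (ln N)) / of_real (exp N)) *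
      (integral\<^sup>L lebesgue (stirling_integrand v N) - of_real (sqrt (2 * pi / N)) *
        (\<Sum>r<R. gamma_coeff r v / of_real N ^ r))"
proof -
  define S where "S = exp ((of_real N + v) * of_real (ln N)) / of_real (exp N)"
  have "S \<noteq> 0" by (simp add: S_def)
  then have Gamma: "Gamma (of_real N + v + 1) = of_real N * S * integral\<^sup>L lebesgue (stirling_integrand v N)"
    using has_bochner_integral_integral_eq[OF has_bochner_integral_stirling_integrand[OF N]] N
    by (simp add: S_def field_simps)
  have sum: "1 + (\<Sum>r = 1..<R. gamma_coeff r v / of_real N ^ r) = (\<Sum>r<R. gamma_coeff r v / of_real N ^ r)"
    using R by (simp add: lessThan_atLeast0 sum.atLeast_Suc_lessThan gamma_coeff_0)
  have "sqrt (2 * pi * N) = sqrt (N\<^sup>2 * (2 * pi / N))"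
    using N by (simp add: power2_eq_square)
  also have "\<dots> = sqrt (N\<^sup>2) * sqrt (2 * pi / N)"
    by (rule real_sqrt_mult)
  finally have sqrt: "sqrt (2 * pi * N) = N * sqrt (2 * pi / N)"
    using N by simp
  show ?thesis
    unfolding Gamma sum sqrt by (simp add: S_def field_simps)
qed

lemma norm_stirling_scale_eq:
  fixes v :: complex and n :: real
  assumes n: "n > 0"
  shows "norm (of_real (sqrt (2 * pi * n)) * exp ((of_real n + v) * of_real (ln n)) / of_real (exp n) * of_real (1 / n ^ R))
    = sqrt (2 * pi) * (n * norm (exp ((of_real n + v) * of_real (ln n)) / of_real (exp n)) * (1 / (n ^ R * sqrt n)))"
proof -
  have "sqrt n * (sqrt n * x) = n * x" for x
    using n by (simp add: mult.assoc[symmetric])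
  then show ?thesis
    using n by (simp add: norm_mult norm_divide norm_power real_sqrt_mult field_simps)
qed

theorem proposition1p1:
  fixes v :: complex and R :: nat
  assumes "R \<ge> 1"
  shows "(\<lambda>n::real. Gamma (of_real n + v + 1)
            - complex_of_real (sqrt (2 * pi * n)) * exp ((of_real n + v) * of_real (ln n)) / of_real (exp n)
              * (1 + (\<Sum>r = 1..<R. gamma_coeff r v / of_real n ^ r)))
         \<in> O[at_top](\<lambda>n::real. complex_of_real (sqrt (2 * pi * n)) * exp ((of_real n + v) * of_real (ln n))
              / of_real (exp n) * of_real (1 / n ^ R))"
proof -
  define S where "S n = norm (exp ((of_real n + v) * of_real (ln n)) / of_real (exp n))" for n :: real
  define E where "E n = norm (integral\<^sup>L lebesgue (stirling_integrand v n) -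
      of_real (sqrt (2 * pi / n)) * (\<Sum>r<R. gamma_coeff r v / of_real n ^ r))" for n
  have "(\<lambda>n. n * S n * E n) \<in> O(\<lambda>n. n * S n * (1 / (n ^ R * sqrt n)))"
    using stirling_integral_asymptotics[OF assms] unfolding E_def by (rule landau_o.big.mult_left)
  then have bound: "(\<lambda>n. n * S n * E n) \<in> O(\<lambda>n. sqrt (2 * pi) * (n * S n * (1 / (n ^ R * sqrt n))))"
    by (subst landau_o.big.cmult) auto
  have lhs: "\<forall>\<^sub>F n in at_top. n * S n * E n = norm (Gamma (of_real n + v + 1)
      - complex_of_real (sqrt (2 * pi * n)) * exp ((of_real n + v) * of_real (ln n)) / of_real (exp n)
        * (1 + (\<Sum>r = 1..<R. gamma_coeff r v / of_real n ^ r)))"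
    using eventually_gt_at_top[of "\<bar>Re v\<bar> + 1"]
  proof eventually_elim
    case (elim n)
    then have "n > 0" "n + Re v + 1 > 0"
      using abs_ge_minus_self[of "Re v"] by linarith+
    then show ?case
      unfolding Gamma_minus_stirling_expansion_eq[OF assms \<open>n > 0\<close> \<open>n + Re v + 1 > 0\<close>] S_def E_def
      by (simp only: norm_mult norm_of_real abs_of_pos[OF \<open>n > 0\<close>])
  qed
  have rhs: "\<forall>\<^sub>F n in at_top. sqrt (2 * pi) * (n * S n * (1 / (n ^ R * sqrt n))) =
      norm (complex_of_real (sqrt (2 * pi * n)) * exp ((of_real n + v) * of_real (ln n))
        / of_real (exp n) * of_real (1 / n ^ R))"
    using eventually_gt_at_top[of 0]
    by eventually_elim (unfold S_def, rule norm_stirling_scale_eq[symmetric])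
  show ?thesis
    by (subst landau_o.big.norm_iff[symmetric]) (rule landau_o.big.cong_ex[OF lhs rhs, THEN iffD1, OF bound])
qed

end
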